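(* Let $\alpha\in(0,1]$ and run the policy $\mathcal P$ below with $(\epsilon,\delta,\gamma)=(\alpha/3,\alpha/6,\alpha/12)$, where $\bar E\ge p_{\min}(1+\alpha/3)$. Assume: (i) for every $n,t$ the function $p\mapsto z_{n,t}(p)$ is nonincreasing on $[p_{\min},\infty)$; (ii) $z_{n,t}(p)=0$ for all $p\ge\bar E$; (iii) the supremum $V^\star=\sup_{p\ge p_{\min}}R(p)$ is attained at some $p_{\rm opt}\ge p_{\min}(1+\alpha/3)$; (iv) $V^\star\ge\frac8\alpha\,\Phi(\alpha/3,\alpha/6,\alpha/12)$. Then $\mathbb E\big[V_{\rm ESP}(\mathcal P)\big]\ge\frac{V^\star}{1+\alpha}$.
   Context: Fix integers $N,T\ge1$ and reals $\bar c>0$, $p_{\min}>0$, $\epsilon>0$, $\bar E\ge p_{\min}(1+\epsilon)$. For each $n\in\{1,\dots,N\}$ and $t\in\{1,\dots,T\}$ fix $c_{n,t}\in[0,\bar c]$ and a response function $z_{n,t}:[p_{\min},\infty)\to[0,1]$, fixed in advance (not depending on the policy's random choices). Let $R(p)=\sum_{n=1}^N\sum_{t=1}^Tp\,c_{n,t}\,z_{n,t}(p)$. Let $K=\lfloor\log_{1+\epsilon}(\bar E/p_{\min})\rfloor$, $\mathcal K=\{1,\dots,K\}$, $p(k)=p_{\min}(1+\epsilon)^k$, $V_{t,n}(k)=p(k)\,c_{n,t}\,z_{n,t}(p(k))$, and $\mathcal S=\sum_{i=1}^K(1+\epsilon)^i$. Policy $\mathcal P$ with parameters $\gamma\in(0,1)$,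 $\delta>0$: set $\omega_1(k)=1$ for all $k$. For $t=1,\dots,T$: let $h_t(k)=(1-\gamma)\frac{\omega_t(k)}{\sum_{j=1}^K\omega_t(j)}+\gamma\frac{(1+\epsilon)^k}{\mathcal S}$; for each $n$ independently draw $\kappa_{t,n}\in\mathcal K$ with $\Pr[\kappa_{t,n}=k]=h_t(k)$, offer price $p(\kappa_{t,n})$ and receive $V_{t,n}(\kappa_{t,n})$; write $\kappa_t=(\kappa_{t,n})_n$; for each $k$ let $V_t(k,\kappa_t)=\sum_{n=1}^NV_{t,n}(\kappa_{t,n})\mathbf 1\{\kappa_{t,n}=k\}$, $\hat V_t(k,\kappa_t)=\frac{V_t(k,\kappa_t)}{N\bar c\,p_{\min}}\cdot\frac{\gamma}{h_t(k)\,\mathcal S}$, and $\omega_{t+1}(k)=\omega_t(k)(1+\delta)^{\hat V_t(k,\kappa_t)}$. The policy's total revenue is $V_{\rm ESP}(\mathcal P)=\sum_{n=1}^N\sum_{t=1}^TV_{t,n}(\kappa_{t,n})$. Define $\Phi(\epsilon,\delta,\gamma)=\frac{1-\gamma}{\gamma}\cdot\frac{1+\epsilon}{\epsilon}\cdot\frac{N\bar E\bar c}{\delta}\cdot\ln\!\Big(\frac{\ln(\bar E/p_{\min})}{\ln(1+\epsilon)}\Big)$. *)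

theory Defs
  imports Complex_Main "HOL-Library.FuncSet"
begin

text \<open>Conventions: c n t = c_{n,t}; z n t p = z_{n,t}(p); all indices n \<in> {1..N}, t \<in> {1..T},
  price levels k \<in> {1..K}.  A weight vector is a function nat \<Rightarrow> real (only values on {1..K} matter).
  An action profile kappa of round t is a function in PiE {1..N} (\<lambda>_. {1..K}).\<close>

definition revenue :: "nat \<Rightarrow> nat \<Rightarrow> (nat \<Rightarrow> nat \<Rightarrow> real) \<Rightarrow> (nat \<Rightarrow> nat \<Rightarrow> real \<Rightarrow> real) \<Rightarrow> real \<Rightarrow> real" where
  "revenue N T c z p = (\<Sum>n\<in>{1..N}. \<Sum>t\<in>{1..T}. p * c n t * z n t p)"

definition numK :: "real \<Rightarrow> real \<Rightarrow> real \<Rightarrow> nat" where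
  "numK pmin eps Ebar = nat \<lfloor>log (1 + eps) (Ebar / pmin)\<rfloor>"

definition price :: "real \<Rightarrow> real \<Rightarrow> nat \<Rightarrow> real" where
  "price pmin eps k = pmin * (1 + eps) ^ k"

definition Vtn :: "(nat \<Rightarrow> nat \<Rightarrow> real) \<Rightarrow> (nat \<Rightarrow> nat \<Rightarrow> real \<Rightarrow> real) \<Rightarrow> real \<Rightarrow> real \<Rightarrow> nat \<Rightarrow> nat \<Rightarrow> nat \<Rightarrow> real" where
  "Vtn c z pmin eps t n k = price pmin eps k * c n t * z n t (price pmin eps k)"

definition Ssum :: "real \<Rightarrow> nat \<Rightarrow> real" where
  "Ssum eps K = (\<Sum>i\<in>{1..K}. (1 + eps) ^ i)"

definition hdist :: "real \<Rightarrow> real \<Rightarrow> nat \<Rightarrow> (nat \<Rightarrow> real) \<Rightarrow> nat \<Rightarrow> real" where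
  "hdist gamma eps K w k =
     (1 - gamma) * w k / (\<Sum>j\<in>{1..K}. w j) + gamma * (1 + eps) ^ k / Ssum eps K"

definition Vround :: "nat \<Rightarrow> (nat \<Rightarrow> nat \<Rightarrow> real) \<Rightarrow> (nat \<Rightarrow> nat \<Rightarrow> real \<Rightarrow> real) \<Rightarrow> real \<Rightarrow> real
    \<Rightarrow> nat \<Rightarrow> (nat \<Rightarrow> nat) \<Rightarrow> nat \<Rightarrow> real" where
  "Vround N c z pmin eps t kappa k =
     (\<Sum>n\<in>{1..N}. Vtn c z pmin eps t n (kappa n) * (if kappa n = k then 1 else 0))"

definition wupd :: "nat \<Rightarrow> real \<Rightarrow> (nat \<Rightarrow> nat \<Rightarrow> real) \<Rightarrow> (nat \<Rightarrow> nat \<Rightarrow> real \<Rightarrow> real) \<Rightarrow> real \<Rightarrow> real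
    \<Rightarrow> real \<Rightarrow> real \<Rightarrow> real \<Rightarrow> nat \<Rightarrow> nat \<Rightarrow> (nat \<Rightarrow> real) \<Rightarrow> (nat \<Rightarrow> nat) \<Rightarrow> nat \<Rightarrow> real" where
  "wupd N cbar c z pmin eps gamma delta Ebar K t w kappa k =
     w k * (1 + delta) powr
       (Vround N c z pmin eps t kappa k / (real N * cbar * pmin)
        * (gamma / (hdist gamma eps K w k * Ssum eps K)))"

text \<open>Expected revenue collected in the r remaining rounds t, t+1, ..., t+r-1, starting from
  weights w at round t.  Each round, the N prices are drawn independently with law h_t,
  so the probability of profile kappa is the product of the h_t(kappa n).\<close>
primrec exp_rev :: "nat \<Rightarrow> real \<Rightarrow> (nat \<Rightarrow> nat \<Rightarrow> real) \<Rightarrow> (nat \<Rightarrow> nat \<Rightarrow> real \<Rightarrow> real) \<Rightarrow> real \<Rightarrow> real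
    \<Rightarrow> real \<Rightarrow> real \<Rightarrow> real \<Rightarrow> nat \<Rightarrow> nat \<Rightarrow> (nat \<Rightarrow> real) \<Rightarrow> real" where
  "exp_rev N cbar c z pmin eps gamma delta Ebar 0 t w = 0"
| "exp_rev N cbar c z pmin eps gamma delta Ebar (Suc r) t w =
     (let K = numK pmin eps Ebar in
      \<Sum>kappa\<in>PiE {1..N} (\<lambda>_. {1..K}).
        (\<Prod>n\<in>{1..N}. hdist gamma eps K w (kappa n)) *
        ((\<Sum>n\<in>{1..N}. Vtn c z pmin eps t n (kappa n)) +
         exp_rev N cbar c z pmin eps gamma delta Ebar r (Suc t)
           (wupd N cbar c z pmin eps gamma delta Ebar K t w kappa)))"

definition expected_VESP :: "nat \<Rightarrow> nat \<Rightarrow> real \<Rightarrow> (nat \<Rightarrow> nat \<Rightarrow> real) \<Rightarrow> (nat \<Rightarrow> nat \<Rightarrow> real \<Rightarrow> real)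
    \<Rightarrow> real \<Rightarrow> real \<Rightarrow> real \<Rightarrow> real \<Rightarrow> real \<Rightarrow> real" where
  "expected_VESP N T cbar c z pmin eps gamma delta Ebar =
     exp_rev N cbar c z pmin eps gamma delta Ebar T 1 (\<lambda>_. 1)"

definition Phi :: "nat \<Rightarrow> real \<Rightarrow> real \<Rightarrow> real \<Rightarrow> real \<Rightarrow> real \<Rightarrow> real \<Rightarrow> real" where
  "Phi N cbar pmin Ebar eps delta gamma =
     (1 - gamma) / gamma * ((1 + eps) / eps) * (real N * Ebar * cbar / delta) *
     ln (ln (Ebar / pmin) / ln (1 + eps))"

end

theory Submission
  imports Defs "HOL-Analysis.Convex"
begin

text \<open>
  The policy is an EXP3-type multiplicative-weights algorithm over the price grid, run with
  importance-weighted revenue estimates whose expectation is a fixed multiple a of the revenue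
  the grid price would have earned. The potential ln of the weight of a fixed grid price minus
  ln of the total weight gains ln(1+\<delta>) times that estimate per round, while ln of the total
  weight grows, in expectation, by at most \<delta> a/(1-\<gamma>) times the revenue actually collected.
  Telescoping over the T rounds bounds the expected revenue from below by
  (1-\<gamma>) ln(1+\<delta>)/\<delta> times the revenue of any grid price, minus an error of order
  ln K that is at most \<Phi>. Monotonicity of the demand makes the best grid price lose at most a
  factor 1+\<epsilon> against p_opt, and for \<alpha> \<le> 1 the chosen constants absorb all losses into 1+\<alpha>.
\<close>

lemma ln_one_plus_ge:
  fixes x :: real assumes "0 \<le> x" shows "x - x^2/2 \<le> ln (1 + x)"
proof -
  have "(\<lambda>x. ln (1+x) - x + x^2/2) 0 \<le> (\<lambda>x. ln (1+x) - x + x^2/2) x"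
  proof (rule DERIV_nonneg_imp_nondecreasing[OF assms])
    fix y :: real assume y: "0 \<le> y" "y \<le> x"
    show "\<exists>d. ((\<lambda>x. ln (1+x) - x + x^2/2) has_real_derivative d) (at y) \<and> d \<ge> 0"
    proof (intro exI conjI)
      show "((\<lambda>x. ln (1+x) - x + x^2/2) has_real_derivative (1/(1+y) - 1 + y)) (at y)"
        using y by (auto intro!: derivative_eq_intros)
      have "1/(1+y) - 1 + y = y^2/(1+y)" using y by (simp add: field_simps power2_eq_square)
      then show "1/(1+y) - 1 + y \<ge> 0" using y by simp
    qed
  qed
  then show ?thesis by simp
qed

lemma one_plus_powr_le:
  fixes d x :: real assumes "0 \<le> d" "0 \<le> x" "x \<le> 1"
  shows "(1 + d) powr x \<le> 1 + d * x"
proof -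
  let ?L = "ln (1 + d)"
  have "exp ((1 - x) *\<^sub>R 0 + x *\<^sub>R ?L) \<le> (1 - x) * exp 0 + x * exp ?L"
    using assms by (intro convex_onD[OF exp_convex]) auto
  moreover have "exp ?L = 1 + d" using assms by simp
  moreover have "(1 + d) powr x = exp (x * ?L)" using assms by (simp add: powr_def)
  ultimately show ?thesis by (simp add: algebra_simps)
qed

lemma floor_log_bounds:
  fixes q x :: real assumes q: "q > 1" and x: "x \<ge> q"
  shows "nat \<lfloor>log q x\<rfloor> \<ge> 1" "q ^ nat \<lfloor>log q x\<rfloor> \<le> x" "x < q ^ Suc (nat \<lfloor>log q x\<rfloor>)"
proof -
  have xp: "x > 0" using q x by linarith
  have l1: "log q x \<ge> 1" using q x xp by (subst le_log_iff) auto
  then have fl: "real (nat \<lfloor>log q x\<rfloor>) = of_int \<lfloor>log q x\<rfloor>" by simp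
  show "nat \<lfloor>log q x\<rfloor> \<ge> 1" using l1 by linarith
  have "q ^ nat \<lfloor>log q x\<rfloor> = q powr real (nat \<lfloor>log q x\<rfloor>)" using q by (simp add: powr_realpow)
  also have "\<dots> \<le> q powr log q x" using q fl by (intro powr_mono) auto
  also have "\<dots> = x" using q xp by simp
  finally show "q ^ nat \<lfloor>log q x\<rfloor> \<le> x" .
  have "x = q powr log q x" using q xp by simp
  also have "\<dots> < q powr real (Suc (nat \<lfloor>log q x\<rfloor>))" using q fl by (intro powr_less_mono) linarith+
  also have "\<dots> = q ^ Suc (nat \<lfloor>log q x\<rfloor>)" using q by (subst powr_realpow) auto
  finally show "x < q ^ Suc (nat \<lfloor>log q x\<rfloor>)" .
qed

lemma geometric_sum_from_1:
  fixes q :: real shows "(\<Sum>i\<in>{1..K}. q ^ i) * (q - 1) = q ^ Suc K - q"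
  by (induction K) (auto simp: algebra_simps)

locale esp_policy =
  fixes N T :: nat and cbar pmin Ebar eps gamma delta :: real
    and c :: "nat \<Rightarrow> nat \<Rightarrow> real" and z :: "nat \<Rightarrow> nat \<Rightarrow> real \<Rightarrow> real"
  assumes N_ge_1: "N \<ge> 1" and cbar_pos: "cbar > 0" and pmin_pos: "pmin > 0"
    and eps_pos: "eps > 0" and gamma_pos: "0 < gamma" and gamma_less_1: "gamma < 1"
    and delta_pos: "delta > 0"
    and Ebar_ge: "Ebar \<ge> pmin * (1 + eps)"
    and c_bounds: "\<And>n t. n \<in> {1..N} \<Longrightarrow> t \<in> {1..T} \<Longrightarrow> 0 \<le> c n t \<and> c n t \<le> cbar"
    and z_bounds: "\<And>n t p. n \<in> {1..N} \<Longrightarrow> t \<in> {1..T} \<Longrightarrow> p \<ge> pmin \<Longrightarrow> 0 \<le> z n t p \<and> z n t p \<le> 1"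
begin

definition "K = numK pmin eps Ebar"
definition "S = Ssum eps K"
definition "h w k = hdist gamma eps K w k"
definition "profile_prob w \<kappa> = (\<Prod>n\<in>{1..N}. h w (\<kappa> n))"
definition "Vhat t w \<kappa> k = Vround N c z pmin eps t \<kappa> k / (real N * cbar * pmin) * (gamma / (h w k * S))"
definition "total_weight (w::nat\<Rightarrow>real) = (\<Sum>j\<in>{1..K}. w j)"
definition "positive_weights (w::nat\<Rightarrow>real) = (\<forall>k\<in>{1..K}. w k > 0)"
definition "fixed_price_revenue t k = (\<Sum>n\<in>{1..N}. Vtn c z pmin eps t n k)"

text \<open>In expectation, Vhat t w \<kappa> k equals a times fixed_price_revenue t k.\<close>
definition "a = gamma / (real N * cbar * pmin * S)"

abbreviation "profiles \<equiv> PiE {1..N} (\<lambda>_. {1..K})"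
abbreviation "wnext t w \<kappa> \<equiv> wupd N cbar c z pmin eps gamma delta Ebar K t w \<kappa>"
abbreviation "collected t \<kappa> \<equiv> \<Sum>n\<in>{1..N}. Vtn c z pmin eps t n (\<kappa> n)"

lemma ratio_ge: "Ebar / pmin \<ge> 1 + eps"
  using Ebar_ge pmin_pos by (simp add: field_simps)

lemma Ebar_pos: "Ebar > 0"
  using ratio_ge eps_pos pmin_pos by (smt (verit) divide_nonpos_pos)

lemma K_eq: "K = nat \<lfloor>log (1 + eps) (Ebar / pmin)\<rfloor>"
  by (simp add: K_def numK_def)

lemma K_ge_1: "K \<ge> 1"
  using floor_log_bounds(1)[OF _ ratio_ge] eps_pos by (simp add: K_eq)

lemma S_pos: "S > 0"
proof -
  have "(\<Sum>i\<in>{1..K}. (1 + eps) ^ i) > 0"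
    using K_ge_1 eps_pos by (intro sum_pos) auto
  then show ?thesis by (simp add: S_def Ssum_def)
qed

lemma a_pos: "a > 0"
  using gamma_pos N_ge_1 cbar_pos pmin_pos S_pos by (simp add: a_def)

lemma price_ge_pmin: "price pmin eps k \<ge> pmin"
  using pmin_pos eps_pos by (simp add: price_def)

lemma price_pos: "price pmin eps k > 0"
  using pmin_pos eps_pos by (simp add: price_def)

lemma Vtn_bounds:
  assumes "t \<in> {1..T}" "n \<in> {1..N}"
  shows "0 \<le> Vtn c z pmin eps t n k \<and> Vtn c z pmin eps t n k \<le> price pmin eps k * cbar"
proof -
  have c: "0 \<le> c n t" "c n t \<le> cbar" using c_bounds assms by auto
  have zz: "0 \<le> z n t (price pmin eps k)" "z n t (price pmin eps k) \<le> 1"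
    using z_bounds[OF assms(2,1) price_ge_pmin] by auto
  have "c n t * z n t (price pmin eps k) \<le> cbar * 1"
    using c zz by (intro mult_mono) auto
  then show ?thesis using less_imp_le[OF price_pos] c zz unfolding Vtn_def
    by (auto intro!: mult_nonneg_nonneg mult_left_mono simp: mult.assoc)
qed

lemma collected_nonneg: "t \<in> {1..T} \<Longrightarrow> collected t \<kappa> \<ge> 0"
  using Vtn_bounds by (intro sum_nonneg) auto

lemma total_weight_pos: "positive_weights w \<Longrightarrow> total_weight w > 0"
  using K_ge_1 unfolding total_weight_def positive_weights_def by (intro sum_pos) auto

lemma h_ge_exploration:
  assumes "positive_weights w" "k \<in> {1..K}"
  shows "h w k \<ge> gamma * (1 + eps) ^ k / S"
proof -
  have "w k > 0" using assms unfolding positive_weights_def by auto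
  then have "(1 - gamma) * w k / (\<Sum>j\<in>{1..K}. w j) \<ge> 0"
    using gamma_less_1 total_weight_pos[OF assms(1)] unfolding total_weight_def by auto
  then show ?thesis by (simp add: h_def hdist_def S_def)
qed

lemma h_pos: "positive_weights w \<Longrightarrow> k \<in> {1..K} \<Longrightarrow> h w k > 0"
  using h_ge_exploration[of w k] gamma_pos eps_pos S_pos
  by (smt (verit) divide_pos_pos mult_pos_pos zero_less_power)

lemma h_ge_exploitation:
  assumes "positive_weights w" "k \<in> {1..K}"
  shows "h w k \<ge> (1 - gamma) * w k / total_weight w"
proof -
  have "gamma * (1 + eps) ^ k / S \<ge> 0" using gamma_pos eps_pos S_pos by auto
  then show ?thesis by (simp add: h_def hdist_def S_def total_weight_def)
qed

lemma h_sum_eq_1: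
  assumes "positive_weights w" shows "(\<Sum>k\<in>{1..K}. h w k) = 1"
proof -
  have "(\<Sum>k\<in>{1..K}. h w k) = (1 - gamma) * (\<Sum>k\<in>{1..K}. w k) / total_weight w
      + gamma * (\<Sum>k\<in>{1..K}. (1 + eps) ^ k) / S"
    by (simp add: h_def hdist_def sum.distrib sum_divide_distrib[symmetric]
        sum_distrib_left[symmetric] total_weight_def S_def)
  also have "\<dots> = 1" using total_weight_pos[OF assms] S_pos
    by (simp add: total_weight_def S_def Ssum_def)
  finally show ?thesis .
qed

lemma Vround_eq:
  "Vround N c z pmin eps t \<kappa> k = (\<Sum>n\<in>{1..N}. if \<kappa> n = k then Vtn c z pmin eps t n k else 0)"
  unfolding Vround_def by (intro sum.cong) auto

lemma sum_Vround:
  assumes "\<kappa> \<in> profiles"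
  shows "(\<Sum>k\<in>{1..K}. Vround N c z pmin eps t \<kappa> k) = collected t \<kappa>"
proof -
  have "(\<Sum>k\<in>{1..K}. Vround N c z pmin eps t \<kappa> k) =
     (\<Sum>n\<in>{1..N}. \<Sum>k\<in>{1..K}. if \<kappa> n = k then Vtn c z pmin eps t n k else 0)"
    unfolding Vround_eq by (rule sum.swap)
  also have "\<dots> = collected t \<kappa>"
    using assms by (intro sum.cong) (auto simp: PiE_def Pi_def sum.delta)
  finally show ?thesis .
qed

text \<open>The exploration part \<gamma> (1+\<epsilon>)^k/S of h grows with the price exactly so as to keep the
  importance weight 1/h below the scale of the revenue at price k.\<close>
lemma Vhat_bounds:
  assumes "positive_weights w" "k \<in> {1..K}" "t \<in> {1..T}"
  shows "0 \<le> Vhat t w \<kappa> k \<and> Vhat t w \<kappa> k \<le> 1"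
proof -
  let ?V = "Vround N c z pmin eps t \<kappa> k"
  have V0: "0 \<le> ?V"
    unfolding Vround_eq using Vtn_bounds[OF assms(3)] by (intro sum_nonneg) auto
  have "?V \<le> (\<Sum>n\<in>{1..N}. price pmin eps k * cbar)"
    unfolding Vround_eq using Vtn_bounds[OF assms(3)] price_ge_pmin pmin_pos cbar_pos
    by (intro sum_mono) (auto intro!: mult_nonneg_nonneg order_trans[OF _ price_ge_pmin])
  then have V: "0 \<le> ?V" "?V \<le> real N * (price pmin eps k * cbar)" using V0 by auto
  have D: "real N * cbar * pmin * (h w k * S) > 0"
    using N_ge_1 cbar_pos pmin_pos h_pos[OF assms(1,2)] S_pos by auto
  have "?V * gamma \<le> real N * (price pmin eps k * cbar) * gamma"
    using V gamma_pos by (intro mult_right_mono) auto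
  also have "\<dots> = real N * cbar * pmin * (gamma * (1 + eps) ^ k)"
    by (simp add: price_def algebra_simps)
  also have "\<dots> \<le> real N * cbar * pmin * (h w k * S)"
    using h_ge_exploration[OF assms(1,2)] S_pos N_ge_1 cbar_pos pmin_pos
    by (intro mult_left_mono) (auto simp: divide_le_eq mult.commute)
  finally show ?thesis
    using D V gamma_pos by (auto simp: Vhat_def divide_le_eq_1)
qed

lemma h_Vhat_eq:
  "positive_weights w \<Longrightarrow> k \<in> {1..K} \<Longrightarrow> h w k * Vhat t w \<kappa> k = a * Vround N c z pmin eps t \<kappa> k"
  using h_pos[of w k] S_pos by (simp add: Vhat_def a_def field_simps)

lemma wnext_eq: "wnext t w \<kappa> k = w k * (1 + delta) powr Vhat t w \<kappa> k"
  by (simp add: wupd_def Vhat_def h_def S_def)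

lemma positive_weights_wnext: "positive_weights w \<Longrightarrow> positive_weights (wnext t w \<kappa>)"
  using delta_pos unfolding positive_weights_def wnext_eq by auto

text \<open>The chord bound for powr and h \<ge> (1-\<gamma>) w/W turn the growth of the total weight into
  the importance-weighted revenue, whose sum over k is the revenue actually collected.\<close>
lemma total_weight_wnext_le:
  assumes "positive_weights w" "t \<in> {1..T}" "\<kappa> \<in> profiles"
  shows "total_weight (wnext t w \<kappa>) \<le> total_weight w * (1 + delta * a / (1 - gamma) * collected t \<kappa>)"
proof -
  let ?W = "total_weight w"
  have w_pos: "\<And>k. k \<in> {1..K} \<Longrightarrow> w k > 0" using assms(1) by (simp add: positive_weights_def)
  have w_le: "w k \<le> ?W / (1 - gamma) * h w k" if "k \<in> {1..K}" for k
    using h_ge_exploitation[OF assms(1) that] total_weight_pos[OF assms(1)] gamma_less_1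
    by (simp add: field_simps)
  have "total_weight (wnext t w \<kappa>) \<le> (\<Sum>k\<in>{1..K}. w k * (1 + delta * Vhat t w \<kappa> k))"
    unfolding total_weight_def wnext_eq
    using w_pos Vhat_bounds[OF assms(1) _ assms(2)] delta_pos
    by (intro sum_mono mult_left_mono one_plus_powr_le) (auto simp: less_imp_le)
  also have "\<dots> = ?W + delta * (\<Sum>k\<in>{1..K}. w k * Vhat t w \<kappa> k)"
    by (simp add: total_weight_def algebra_simps sum.distrib sum_distrib_left)
  also have "(\<Sum>k\<in>{1..K}. w k * Vhat t w \<kappa> k) \<le> (\<Sum>k\<in>{1..K}. ?W / (1 - gamma) * (h w k * Vhat t w \<kappa> k))"
    using w_le Vhat_bounds[OF assms(1) _ assms(2)]
    by (intro sum_mono) (metis mult.assoc mult_right_mono)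
  also have "\<dots> = ?W / (1 - gamma) * a * (\<Sum>k\<in>{1..K}. Vround N c z pmin eps t \<kappa> k)"
    using h_Vhat_eq[OF assms(1)] by (simp add: sum_distrib_left mult.assoc)
  finally show ?thesis
    using delta_pos sum_Vround[OF assms(3)] by (simp add: algebra_simps)
qed

lemma ln_total_weight_wnext_le:
  assumes "positive_weights w" "t \<in> {1..T}" "\<kappa> \<in> profiles"
  shows "ln (total_weight (wnext t w \<kappa>)) - ln (total_weight w) \<le> delta * a / (1 - gamma) * collected t \<kappa>"
proof -
  let ?x = "delta * a / (1 - gamma) * collected t \<kappa>"
  have x0: "?x \<ge> 0" using delta_pos a_pos gamma_less_1 collected_nonneg[OF assms(2)] by auto
  have "ln (total_weight (wnext t w \<kappa>)) \<le> ln (total_weight w * (1 + ?x))"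
    using total_weight_wnext_le[OF assms] total_weight_pos[OF positive_weights_wnext[OF assms(1)]]
    by (rule ln_mono)
  also have "\<dots> = ln (total_weight w) + ln (1 + ?x)"
    using total_weight_pos[OF assms(1)] x0 by (simp add: ln_mult)
  also have "ln (1 + ?x) \<le> ?x" using x0 by (rule ln_add_one_self_le_self)
  finally show ?thesis by simp
qed

lemma profile_prob_sum_eq_1:
  assumes "positive_weights w" shows "(\<Sum>\<kappa>\<in>profiles. profile_prob w \<kappa>) = 1"
  using prod_sum_PiE[of "{1..N}" "\<lambda>_. {1..K}" "\<lambda>_. h w"] h_sum_eq_1[OF assms]
  by (simp add: profile_prob_def)

lemma profile_prob_nonneg:
  "positive_weights w \<Longrightarrow> \<kappa> \<in> profiles \<Longrightarrow> profile_prob w \<kappa> \<ge> 0"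
  unfolding profile_prob_def using h_pos by (intro prod_nonneg) (auto simp: PiE_def Pi_def less_imp_le)

lemma expectation_of_coordinate:
  assumes "positive_weights w" "n0 \<in> {1..N}"
  shows "(\<Sum>\<kappa>\<in>profiles. profile_prob w \<kappa> * f (\<kappa> n0)) = (\<Sum>k\<in>{1..K}. h w k * f k)"
proof -
  have "(\<Sum>\<kappa>\<in>profiles. profile_prob w \<kappa> * f (\<kappa> n0))
      = (\<Sum>\<kappa>\<in>profiles. \<Prod>n\<in>{1..N}. h w (\<kappa> n) * (if n = n0 then f (\<kappa> n) else 1))"
    unfolding profile_prob_def prod.distrib using assms(2) by (simp add: prod.delta)
  also have "\<dots> = (\<Prod>n\<in>{1..N}. \<Sum>k\<in>{1..K}. h w k * (if n = n0 then f k else 1))"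
    by (rule prod_sum_PiE[symmetric]) auto
  also have "\<dots> = (\<Prod>n\<in>{1..N}. if n = n0 then (\<Sum>k\<in>{1..K}. h w k * f k) else 1)"
    using h_sum_eq_1[OF assms(1)] by (intro prod.cong) auto
  also have "\<dots> = (\<Sum>k\<in>{1..K}. h w k * f k)" using assms(2) by (simp add: prod.delta)
  finally show ?thesis .
qed

lemma expectation_of_Vhat:
  assumes "positive_weights w" "k \<in> {1..K}"
  shows "(\<Sum>\<kappa>\<in>profiles. profile_prob w \<kappa> * Vhat t w \<kappa> k) = a * fixed_price_revenue t k"
proof -
  define D where "D = 1 / (real N * cbar * pmin) * (gamma / (h w k * S))"
  define v where "v n j = (if j = k then Vtn c z pmin eps t n k else 0)" for n j
  have "\<And>\<kappa>. Vhat t w \<kappa> k = D * (\<Sum>n\<in>{1..N}. v n (\<kappa> n))"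
    by (simp add: Vhat_def Vround_eq D_def v_def)
  then have "(\<Sum>\<kappa>\<in>profiles. profile_prob w \<kappa> * Vhat t w \<kappa> k)
      = D * (\<Sum>\<kappa>\<in>profiles. \<Sum>n\<in>{1..N}. profile_prob w \<kappa> * v n (\<kappa> n))"
    by (simp add: sum_distrib_left algebra_simps)
  also have "\<dots> = D * (\<Sum>n\<in>{1..N}. \<Sum>\<kappa>\<in>profiles. profile_prob w \<kappa> * v n (\<kappa> n))"
    by (subst sum.swap) (rule refl)
  also have "\<dots> = D * (\<Sum>n\<in>{1..N}. \<Sum>j\<in>{1..K}. h w j * v n j)"
    using expectation_of_coordinate[OF assms(1)] by simp
  also have "\<dots> = D * (\<Sum>n\<in>{1..N}. h w k * Vtn c z pmin eps t n k)"
    using assms(2) by (simp add: v_def if_distrib[of "\<lambda>x. h w _ * x"] sum.delta' cong: if_cong)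
  also have "\<dots> = a * fixed_price_revenue t k"
    using h_pos[OF assms] S_pos N_ge_1 cbar_pos pmin_pos
    by (simp add: D_def a_def fixed_price_revenue_def sum_distrib_left[symmetric] field_simps)
  finally show ?thesis .
qed

lemma exp_rev_Suc:
  "exp_rev N cbar c z pmin eps gamma delta Ebar (Suc r) t w =
     (\<Sum>\<kappa>\<in>profiles. profile_prob w \<kappa> *
        (collected t \<kappa> + exp_rev N cbar c z pmin eps gamma delta Ebar r (Suc t) (wnext t w \<kappa>)))"
  by (simp add: Let_def K_def[symmetric] profile_prob_def h_def)

definition "potential r t w k =
  (1 - gamma) / (delta * a) *
    (ln (1 + delta) * a * (\<Sum>s\<in>{t..<t+r}. fixed_price_revenue s k) + ln (w k) - ln (total_weight w))"

lemma potential_0_le_0: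
  assumes "positive_weights w" "k \<in> {1..K}" shows "potential 0 t w k \<le> 0"
proof -
  have "w k \<le> total_weight w" unfolding total_weight_def using assms
    by (intro member_le_sum) (auto simp: positive_weights_def less_imp_le)
  then have "ln (w k) \<le> ln (total_weight w)"
    using assms by (intro ln_mono) (auto simp: positive_weights_def)
  moreover have "(1 - gamma) / (delta * a) \<ge> 0" using gamma_less_1 delta_pos a_pos by auto
  ultimately show ?thesis unfolding potential_def by (intro mult_nonneg_nonpos) auto
qed

lemma potential_Suc_eq_expectation:
  assumes "positive_weights w" "k \<in> {1..K}"
  shows "potential (Suc r) t w k = (\<Sum>\<kappa>\<in>profiles. profile_prob w \<kappa> *
      ((1 - gamma) / (delta * a) * ln (1 + delta) * Vhat t w \<kappa> k + potential r (Suc t) w k))"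
proof -
  define C where "C = (1 - gamma) / (delta * a) * ln (1 + delta)"
  have "(\<Sum>s\<in>{t..<t + Suc r}. fixed_price_revenue s k)
      = fixed_price_revenue t k + (\<Sum>s\<in>{Suc t..<Suc t + r}. fixed_price_revenue s k)"
    by (subst sum.atLeast_Suc_lessThan) auto
  then have "potential (Suc r) t w k = C * (a * fixed_price_revenue t k) + potential r (Suc t) w k"
    by (simp add: potential_def C_def algebra_simps)
  also have "\<dots> = C * (\<Sum>\<kappa>\<in>profiles. profile_prob w \<kappa> * Vhat t w \<kappa> k)
      + potential r (Suc t) w k * (\<Sum>\<kappa>\<in>profiles. profile_prob w \<kappa>)"
    using profile_prob_sum_eq_1[OF assms(1)] expectation_of_Vhat[OF assms] by simp
  also have "\<dots> = (\<Sum>\<kappa>\<in>profiles. profile_prob w \<kappa> * (C * Vhat t w \<kappa> k + potential r (Suc t) w k))"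
    by (simp add: sum_distrib_left sum_distrib_right sum.distrib algebra_simps)
  finally show ?thesis by (simp add: C_def)
qed

text \<open>Per price profile, the gain of the potential through ln of the weight of k cancels
  against its loss through ln of the total weight up to the collected revenue.\<close>
lemma potential_step:
  assumes "positive_weights w" "k \<in> {1..K}" "t \<in> {1..T}" "\<kappa> \<in> profiles"
  shows "(1 - gamma) / (delta * a) * ln (1 + delta) * Vhat t w \<kappa> k + potential r (Suc t) w k
      \<le> collected t \<kappa> + potential r (Suc t) (wnext t w \<kappa>) k"
proof -
  define C where "C = (1 - gamma) / (delta * a)"
  have C_pos: "C > 0" using gamma_less_1 delta_pos a_pos by (simp add: C_def)
  have "C * (ln (total_weight (wnext t w \<kappa>)) - ln (total_weight w)) \<le> C * (delta * a / (1 - gamma) * collected t \<kappa>)"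
    using ln_total_weight_wnext_le[OF assms(1,3,4)] C_pos by (intro mult_left_mono) auto
  also have "\<dots> = collected t \<kappa>" using gamma_less_1 delta_pos a_pos by (simp add: C_def field_simps)
  finally have "C * (ln (total_weight (wnext t w \<kappa>)) - ln (total_weight w)) \<le> collected t \<kappa>" .
  moreover have "ln (wnext t w \<kappa> k) = ln (w k) + Vhat t w \<kappa> k * ln (1 + delta)"
    unfolding wnext_eq using assms(1,2) delta_pos
    by (simp add: positive_weights_def ln_mult ln_powr less_imp_neq[symmetric])
  ultimately show ?thesis by (simp add: potential_def C_def[symmetric] algebra_simps)
qed

lemma potential_le_exp_rev:
  assumes "k \<in> {1..K}" "positive_weights w" "1 \<le> t" "t + r \<le> Suc T"
  shows "potential r t w k \<le> exp_rev N cbar c z pmin eps gamma delta Ebar r t w"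
  using assms(2-)
proof (induction r arbitrary: w t)
  case 0
  then show ?case using potential_0_le_0[OF _ assms(1)] by simp
next
  case (Suc r)
  have t: "t \<in> {1..T}" using Suc.prems by auto
  have "potential (Suc r) t w k = (\<Sum>\<kappa>\<in>profiles. profile_prob w \<kappa> *
      ((1 - gamma) / (delta * a) * ln (1 + delta) * Vhat t w \<kappa> k + potential r (Suc t) w k))"
    by (rule potential_Suc_eq_expectation[OF Suc.prems(1) assms(1)])
  also have "\<dots> \<le> (\<Sum>\<kappa>\<in>profiles. profile_prob w \<kappa> *
      (collected t \<kappa> + exp_rev N cbar c z pmin eps gamma delta Ebar r (Suc t) (wnext t w \<kappa>)))"
  proof (intro sum_mono mult_left_mono)
    fix \<kappa> assume \<kappa>: "\<kappa> \<in> profiles"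
    have "potential r (Suc t) (wnext t w \<kappa>) k \<le> exp_rev N cbar c z pmin eps gamma delta Ebar r (Suc t) (wnext t w \<kappa>)"
      using Suc.IH positive_weights_wnext Suc.prems by simp
    then show "(1 - gamma) / (delta * a) * ln (1 + delta) * Vhat t w \<kappa> k + potential r (Suc t) w k
        \<le> collected t \<kappa> + exp_rev N cbar c z pmin eps gamma delta Ebar r (Suc t) (wnext t w \<kappa>)"
      using potential_step[OF Suc.prems(1) assms(1) t \<kappa>, where r = r] by linarith
    show "profile_prob w \<kappa> \<ge> 0" by (rule profile_prob_nonneg[OF Suc.prems(1) \<kappa>])
  qed
  also have "\<dots> = exp_rev N cbar c z pmin eps gamma delta Ebar (Suc r) t w"
    by (rule exp_rev_Suc[symmetric])
  finally show ?case .
qed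

lemma regret_bound:
  assumes "k \<in> {1..K}"
  shows "expected_VESP N T cbar c z pmin eps gamma delta Ebar \<ge>
     (1 - gamma) * ln (1 + delta) / delta * (\<Sum>t\<in>{1..T}. fixed_price_revenue t k)
     - (1 - gamma) * real N * cbar * pmin * S / (delta * gamma) * ln (real K)"
proof -
  have "positive_weights (\<lambda>_. 1)" by (simp add: positive_weights_def)
  from potential_le_exp_rev[OF assms this, of 1 T]
  have "potential T 1 (\<lambda>_. 1) k \<le> expected_VESP N T cbar c z pmin eps gamma delta Ebar"
    by (simp add: expected_VESP_def)
  moreover have "{1..<1+T} = {1..T}" by auto
  then have "potential T 1 (\<lambda>_. 1) k = (1 - gamma) / (delta * a) *
      (ln (1 + delta) * a * (\<Sum>t\<in>{1..T}. fixed_price_revenue t k) - ln (real K))"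
    by (simp add: potential_def total_weight_def)
  moreover have "\<dots> = (1 - gamma) * ln (1 + delta) / delta * (\<Sum>t\<in>{1..T}. fixed_price_revenue t k)
     - (1 - gamma) * real N * cbar * pmin * S / (delta * gamma) * ln (real K)"
    using a_pos delta_pos gamma_pos S_pos N_ge_1 cbar_pos pmin_pos
    by (simp add: a_def field_simps)
  ultimately show ?thesis by simp
qed

lemma regret_error_le_Phi:
  "(1 - gamma) * real N * cbar * pmin * S / (delta * gamma) * ln (real K)
     \<le> Phi N cbar pmin Ebar eps delta gamma"
proof -
  let ?q = "1 + eps"
  have q: "?q > 1" using eps_pos by simp
  have "S * eps = ?q ^ Suc K - ?q"
    using geometric_sum_from_1[of ?q K] by (simp add: S_def Ssum_def)
  also have "\<dots> \<le> ?q * (Ebar / pmin)"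
    using mult_left_mono[OF floor_log_bounds(2)[OF q ratio_ge], of ?q] q by (simp add: K_eq)
  finally have pS: "pmin * S \<le> ?q / eps * Ebar"
    using eps_pos pmin_pos by (simp add: field_simps)
  have "real K \<le> log ?q (Ebar / pmin)"
    using floor_log_bounds(1)[OF q ratio_ge] unfolding K_eq by linarith
  then have lnK: "ln (real K) \<le> ln (ln (Ebar / pmin) / ln ?q)"
    using K_ge_1 by (simp add: log_def)
  have "(pmin * S) * ln (real K) \<le> (?q / eps * Ebar) * ln (ln (Ebar / pmin) / ln ?q)"
    using K_ge_1 S_pos pmin_pos eps_pos Ebar_pos by (intro mult_mono[OF pS lnK]) auto
  then have "(1 - gamma) / gamma * (real N * cbar / delta) * ((pmin * S) * ln (real K))
      \<le> (1 - gamma) / gamma * (real N * cbar / delta) * ((?q / eps * Ebar) * ln (ln (Ebar / pmin) / ln ?q))"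
    using gamma_pos gamma_less_1 delta_pos cbar_pos by (intro mult_left_mono) auto
  then show ?thesis by (simp add: Phi_def field_simps)
qed

lemma revenue_price_eq: "revenue N T c z (price pmin eps k) = (\<Sum>t\<in>{1..T}. fixed_price_revenue t k)"
  unfolding revenue_def fixed_price_revenue_def Vtn_def by (rule sum.swap)

lemma revenue_nonneg: "p \<ge> pmin \<Longrightarrow> revenue N T c z p \<ge> 0"
  unfolding revenue_def using pmin_pos c_bounds z_bounds by (intro sum_nonneg mult_nonneg_nonneg) auto

text \<open>Rounding p down to the grid loses at most the factor 1+\<epsilon>, since demand only grows.
  Prices at or above Ebar earn nothing, so they are covered by any grid price.\<close>
lemma exists_grid_price_revenue_ge:
  assumes mono: "\<And>n t p q. n \<in> {1..N} \<Longrightarrow> t \<in> {1..T} \<Longrightarrow> pmin \<le> p \<Longrightarrow> p \<le> q \<Longrightarrow> z n t q \<le> z n t p"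
    and zero: "\<And>n t p. n \<in> {1..N} \<Longrightarrow> t \<in> {1..T} \<Longrightarrow> p \<ge> Ebar \<Longrightarrow> z n t p = 0"
    and p: "p \<ge> pmin * (1 + eps)"
  shows "\<exists>k\<in>{1..K}. revenue N T c z (price pmin eps k) \<ge> revenue N T c z p / (1 + eps)"
proof (cases "p < Ebar")
  case True
  let ?q = "1 + eps"
  define k where "k = nat \<lfloor>log ?q (p / pmin)\<rfloor>"
  have q: "?q > 1" and pq: "p / pmin \<ge> ?q" using eps_pos pmin_pos p by (auto simp: field_simps)
  have k: "k \<in> {1..K}" unfolding k_def K_eq
    using floor_log_bounds(1)[OF q pq] True pq pmin_pos q
    by (auto intro!: nat_mono floor_mono log_mono divide_right_mono)
  have pk: "price pmin eps k \<le> p" "p / ?q \<le> price pmin eps k"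
    using floor_log_bounds(2,3)[OF q pq] pmin_pos q
    by (simp_all add: price_def k_def field_simps)
  have "revenue N T c z p / ?q = (\<Sum>n\<in>{1..N}. \<Sum>t\<in>{1..T}. (p / ?q) * c n t * z n t p)"
    by (simp add: revenue_def sum_divide_distrib)
  also have "\<dots> \<le> revenue N T c z (price pmin eps k)" unfolding revenue_def
  proof (intro sum_mono)
    fix n t assume n: "n \<in> {1..N}" and t: "t \<in> {1..T}"
    have "pmin \<le> p" using p pmin_pos eps_pos by (smt (verit) mult_le_cancel_left1)
    then have "0 \<le> c n t" "0 \<le> z n t p" using c_bounds[OF n t] z_bounds[OF n t] by auto
    then show "p / ?q * c n t * z n t p \<le> price pmin eps k * c n t * z n t (price pmin eps k)"
      using pk mono[OF n t price_ge_pmin pk(1)] price_pos[of k]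
      by (intro mult_mono) auto
  qed
  finally show ?thesis using k by auto
next
  case False
  then have "revenue N T c z p = 0" unfolding revenue_def using zero by auto
  then show ?thesis using K_ge_1 revenue_nonneg[OF price_ge_pmin] by auto
qed

theorem expected_revenue_ge:
  assumes "\<And>n t p q. n \<in> {1..N} \<Longrightarrow> t \<in> {1..T} \<Longrightarrow> pmin \<le> p \<Longrightarrow> p \<le> q \<Longrightarrow> z n t q \<le> z n t p"
    and "\<And>n t p. n \<in> {1..N} \<Longrightarrow> t \<in> {1..T} \<Longrightarrow> p \<ge> Ebar \<Longrightarrow> z n t p = 0"
    and "p \<ge> pmin * (1 + eps)"
  shows "expected_VESP N T cbar c z pmin eps gamma delta Ebar \<ge>
     (1 - gamma) * ln (1 + delta) / delta * (revenue N T c z p / (1 + eps))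
     - Phi N cbar pmin Ebar eps delta gamma"
proof -
  obtain k where k: "k \<in> {1..K}" and Rk: "revenue N T c z (price pmin eps k) \<ge> revenue N T c z p / (1 + eps)"
    using exists_grid_price_revenue_ge[OF assms] by blast
  have "(1 - gamma) * ln (1 + delta) / delta \<ge> 0" using gamma_less_1 delta_pos by simp
  from mult_left_mono[OF Rk this] show ?thesis
    using regret_bound[OF k] regret_error_le_Phi unfolding revenue_price_eq by linarith
qed

end

lemma alpha_parameter_ineq:
  fixes x :: real assumes "0 < x" "x \<le> 1"
  shows "1 / (1 + x) \<le> (1 - x/12)^2 / (1 + x/3) - x / 8"
proof -
  have "x^2 \<le> 1" using assms by (simp add: power_le_one)
  then have "0 \<le> x * (162 - 141 * x - 15 * x^2) / (144 * (3 + x) * (1 + x))"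
    using assms by (intro divide_nonneg_pos mult_nonneg_nonneg) auto
  also have "\<dots> = (1 - x/12)^2 / (1 + x/3) - x / 8 - 1 / (1 + x)"
    using assms by (simp add: divide_simps power2_eq_square) (simp add: algebra_simps)
  finally show ?thesis by simp
qed

theorem corollary1:
  fixes N T :: nat and cbar pmin Ebar alpha popt :: real
    and c :: "nat \<Rightarrow> nat \<Rightarrow> real" and z :: "nat \<Rightarrow> nat \<Rightarrow> real \<Rightarrow> real"
  assumes "N \<ge> 1" and "T \<ge> 1" and "cbar > 0" and "pmin > 0"
    and "0 < alpha" and "alpha \<le> 1"
    and "Ebar \<ge> pmin * (1 + alpha / 3)"
    and "\<And>n t. n \<in> {1..N} \<Longrightarrow> t \<in> {1..T} \<Longrightarrow> 0 \<le> c n t \<and> c n t \<le> cbar"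
    and "\<And>n t p. n \<in> {1..N} \<Longrightarrow> t \<in> {1..T} \<Longrightarrow> p \<ge> pmin \<Longrightarrow> 0 \<le> z n t p \<and> z n t p \<le> 1"
    and "\<And>n t p q. n \<in> {1..N} \<Longrightarrow> t \<in> {1..T} \<Longrightarrow> pmin \<le> p \<Longrightarrow> p \<le> q \<Longrightarrow> z n t q \<le> z n t p"
    and "\<And>n t p. n \<in> {1..N} \<Longrightarrow> t \<in> {1..T} \<Longrightarrow> p \<ge> Ebar \<Longrightarrow> z n t p = 0"
    and "popt \<ge> pmin * (1 + alpha / 3)"
    and "\<And>p. p \<ge> pmin \<Longrightarrow> revenue N T c z p \<le> revenue N T c z popt"
    and "revenue N T c z popt \<ge> 8 / alpha * Phi N cbar pmin Ebar (alpha / 3) (alpha / 6) (alpha / 12)"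
  shows "expected_VESP N T cbar c z pmin (alpha / 3) (alpha / 12) (alpha / 6) Ebar
           \<ge> revenue N T c z popt / (1 + alpha)"
proof -
  interpret esp_policy N T cbar pmin Ebar "alpha / 3" "alpha / 12" "alpha / 6" c z
    using assms by unfold_locales auto
  define R where "R = revenue N T c z popt"
  have "pmin \<le> pmin * (1 + alpha / 3)" using assms(4,5) by simp
  then have R_nonneg: "R \<ge> 0" using revenue_nonneg assms(12) by (simp add: R_def)
  have Phi_le: "Phi N cbar pmin Ebar (alpha / 3) (alpha / 6) (alpha / 12) \<le> alpha / 8 * R"
    using assms(5,14) by (simp add: R_def field_simps)
  have ln_ratio: "ln (1 + alpha / 6) / (alpha / 6) \<ge> 1 - alpha / 12"
    using ln_one_plus_ge[of "alpha / 6"] assms(5) by (simp add: field_simps power2_eq_square)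
  have A: "(1 - alpha / 12) * ln (1 + alpha / 6) / (alpha / 6) \<ge> (1 - alpha / 12)^2"
    using mult_left_mono[OF ln_ratio, of "1 - alpha / 12"] assms(6) by (simp add: power2_eq_square)
  have "R / (1 + alpha) \<le> ((1 - alpha / 12)^2 / (1 + alpha / 3) - alpha / 8) * R"
    using mult_right_mono[OF alpha_parameter_ineq[OF assms(5,6)] R_nonneg] by simp
  also have "\<dots> = (1 - alpha / 12)^2 * (R / (1 + alpha / 3)) - alpha / 8 * R"
    by (simp add: algebra_simps)
  also have "\<dots> \<le> (1 - alpha / 12) * ln (1 + alpha / 6) / (alpha / 6) * (R / (1 + alpha / 3))
      - Phi N cbar pmin Ebar (alpha / 3) (alpha / 6) (alpha / 12)"
    using mult_right_mono[OF A, of "R / (1 + alpha / 3)"] R_nonneg assms(5) Phi_le by simp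
  also have "\<dots> \<le> expected_VESP N T cbar c z pmin (alpha / 3) (alpha / 12) (alpha / 6) Ebar"
    using expected_revenue_ge[OF assms(10,11,12)] by (simp add: R_def)
  finally show ?thesis by (simp add: R_def)
qed

end
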